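(* Let $T$ be a tree on at least three vertices and $S \subseteq V(T)$. For a leaf $\ell \in S$, say that $S$ satisfies condition (II) for $\ell$ if every edge $\{a,b\}$ of $T$ with $a$ closer to $\ell$ than $b$ satisfies: (i) if $a,b\notin S$ then $N(b)\cap S=\emptyset$; (ii) if $a\notin S$, $b\in S$ then $|N(b)\cap S|\le 1$; (iii) if $a\in S$, $b\notin S$ then $|(N(b)\cap S)\setminus\{a\}|=1$; (iv) if $a,b\in S$ then $|(N(b)\cap S)\setminus\{a\}|=0$. If $S$ satisfies condition (II) for some leaf $\ell' \in S$, then $S$ satisfies condition (II) for every other leaf $\ell'' \in S$.
   Context: $N(b)$ is the set of neighbors of $b$; distances are graph distances in $T$; a leaf is a vertex of degree one. *)

theory Defs
  imports Main
begin

definition graph :: "'a set \<Rightarrow> ('a \<Rightarrow> 'a \<Rightarrow> bool) \<Rightarrow> bool" where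
  "graph V E \<longleftrightarrow> finite V \<and> (\<forall>x y. E x y \<longrightarrow> x \<in> V \<and> y \<in> V)
     \<and> (\<forall>x y. E x y \<longrightarrow> E y x) \<and> (\<forall>x. \<not> E x x)"

definition walk :: "'a set \<Rightarrow> ('a \<Rightarrow> 'a \<Rightarrow> bool) \<Rightarrow> 'a list \<Rightarrow> bool" where
  "walk V E xs \<longleftrightarrow> xs \<noteq> [] \<and> set xs \<subseteq> V \<and> (\<forall>i. Suc i < length xs \<longrightarrow> E (xs ! i) (xs ! Suc i))"

definition connected_graph :: "'a set \<Rightarrow> ('a \<Rightarrow> 'a \<Rightarrow> bool) \<Rightarrow> bool" where
  "connected_graph V E \<longleftrightarrow>
     (\<forall>u\<in>V. \<forall>v\<in>V. \<exists>xs. walk V E xs \<and> hd xs = u \<and> last xs = v)"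

definition is_cycle :: "'a set \<Rightarrow> ('a \<Rightarrow> 'a \<Rightarrow> bool) \<Rightarrow> 'a list \<Rightarrow> bool" where
  "is_cycle V E xs \<longleftrightarrow> walk V E xs \<and> distinct xs \<and> length xs \<ge> 3 \<and> E (last xs) (hd xs)"

definition tree :: "'a set \<Rightarrow> ('a \<Rightarrow> 'a \<Rightarrow> bool) \<Rightarrow> bool" where
  "tree V E \<longleftrightarrow> graph V E \<and> V \<noteq> {} \<and> connected_graph V E \<and> (\<nexists>xs. is_cycle V E xs)"

definition gdist :: "'a set \<Rightarrow> ('a \<Rightarrow> 'a \<Rightarrow> bool) \<Rightarrow> 'a \<Rightarrow> 'a \<Rightarrow> nat" where
  "gdist V E u v = (LEAST n. \<exists>xs. walk V E xs \<and> hd xs = u \<and> last xs = v \<and> length xs = Suc n)"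

definition nbhd :: "'a set \<Rightarrow> ('a \<Rightarrow> 'a \<Rightarrow> bool) \<Rightarrow> 'a \<Rightarrow> 'a set" where
  "nbhd V E b = {x \<in> V. E b x}"

definition leaf :: "'a set \<Rightarrow> ('a \<Rightarrow> 'a \<Rightarrow> bool) \<Rightarrow> 'a \<Rightarrow> bool" where
  "leaf V E v \<longleftrightarrow> v \<in> V \<and> card (nbhd V E v) = 1"

definition condII :: "'a set \<Rightarrow> ('a \<Rightarrow> 'a \<Rightarrow> bool) \<Rightarrow> 'a set \<Rightarrow> 'a \<Rightarrow> bool" where
  "condII V E S l \<longleftrightarrow>
    (\<forall>a b. E a b \<and> gdist V E l a < gdist V E l b \<longrightarrow>
       (a \<notin> S \<and> b \<notin> S \<longrightarrow> nbhd V E b \<inter> S = {}) \<and>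
       (a \<notin> S \<and> b \<in> S \<longrightarrow> card (nbhd V E b \<inter> S) \<le> 1) \<and>
       (a \<in> S \<and> b \<notin> S \<longrightarrow> card ((nbhd V E b \<inter> S) - {a}) = 1) \<and>
       (a \<in> S \<and> b \<in> S \<longrightarrow> card ((nbhd V E b \<inter> S) - {a}) = 0))"

end

theory Submission
  imports Defs
begin

text \<open>Root the tree at \<open>l1\<close>. An edge oriented towards \<open>l2\<close> is either oriented the same way
  towards \<open>l1\<close>, where condition (II) for \<open>l1\<close> applies verbatim, or it lies on the path between
  the two leaves and is reversed. For a reversed edge \<open>(a, b)\<close>, with \<open>b\<close> the \<open>l1\<close>-parent of \<open>a\<close>:
  if \<open>b \<in> S\<close>, condition (II) for \<open>l1\<close> at the edge into \<open>b\<close> shows that \<open>b\<close> has at most one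
  neighbour in \<open>S\<close>; if \<open>b \<notin> S\<close>, then \<open>a \<in> S\<close>, since otherwise clause (i) would propagate
  "outside \<open>S\<close>" along the whole path towards \<open>l2 \<in> S\<close>, and clause (iii) at the edge into \<open>b\<close>
  then says that the \<open>S\<close>-neighbours of \<open>b\<close> are exactly \<open>a\<close> and the \<open>l1\<close>-parent of \<open>b\<close>.\<close>

lemma walk_iff_successively:
  "walk V E xs \<longleftrightarrow> xs \<noteq> [] \<and> set xs \<subseteq> V \<and> successively E xs"
  unfolding walk_def successively_conv_nth by blast

lemma gdist_le_length:
  assumes "walk V E xs" "hd xs = u" "last xs = v"
  shows "gdist V E u v \<le> length xs - 1"
proof -
  have "length xs = Suc (length xs - 1)"
    using assms(1) by (simp add: walk_def)
  then show ?thesis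
    unfolding gdist_def using assms by (intro Least_le) blast
qed

lemma gdist_le_prefix_length:
  assumes "walk V E (as @ w # bs)" "hd (as @ w # bs) = u"
  shows "gdist V E u w \<le> length as"
proof -
  have "walk V E (as @ [w])"
    using assms(1) by (auto simp: walk_iff_successively successively_append_iff)
  moreover have "hd (as @ [w]) = u"
    using assms(2) by (cases as) auto
  ultimately show ?thesis
    using gdist_le_length[of V E "as @ [w]" u w] by simp
qed

definition shortest_walk :: "'a set \<Rightarrow> ('a \<Rightarrow> 'a \<Rightarrow> bool) \<Rightarrow> 'a \<Rightarrow> 'a \<Rightarrow> 'a list \<Rightarrow> bool" where
  "shortest_walk V E u v xs \<longleftrightarrow>
     walk V E xs \<and> hd xs = u \<and> last xs = v \<and> length xs = Suc (gdist V E u v)"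

lemma shortest_walk_exists:
  assumes "connected_graph V E" "u \<in> V" "v \<in> V"
  obtains xs where "shortest_walk V E u v xs"
proof -
  obtain xs where "walk V E xs" "hd xs = u" "last xs = v"
    using assms unfolding connected_graph_def by blast
  then have "\<exists>n xs. walk V E xs \<and> hd xs = u \<and> last xs = v \<and> length xs = Suc n"
    by (intro exI[of _ "length xs - 1"] exI[of _ xs]) (auto simp: walk_def)
  from LeastI_ex[OF this] show ?thesis
    using that unfolding gdist_def shortest_walk_def by blast
qed

lemma shortest_walk_distinct:
  assumes "shortest_walk V E u v xs"
  shows "distinct xs"
proof (rule ccontr)
  assume "\<not> distinct xs"
  then obtain as y bs cs where xs: "xs = as @ [y] @ bs @ [y] @ cs"
    using not_distinct_decomp by blast
  let ?ys = "as @ [y] @ cs"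
  have "walk V E ?ys"
    using assms unfolding xs shortest_walk_def
    by (auto simp: walk_iff_successively successively_append_iff successively_Cons split: if_splits)
  moreover have "hd ?ys = u" "last ?ys = v"
    using assms unfolding xs shortest_walk_def by (cases as; cases cs; simp)+
  ultimately have "gdist V E u v \<le> length ?ys - 1"
    by (rule gdist_le_length)
  then show False
    using assms unfolding xs shortest_walk_def by simp
qed

lemma gdist_less_if_in_shortest_walk:
  assumes "shortest_walk V E u v xs" "w \<in> set xs" "w \<noteq> v"
  shows "gdist V E u w < gdist V E u v"
proof -
  obtain as bs where xs: "xs = as @ w # bs"
    using assms(2) split_list by metis
  have "bs \<noteq> []"
    using assms unfolding xs shortest_walk_def by auto
  have "gdist V E u w \<le> length as"
    using gdist_le_prefix_length assms(1) unfolding xs shortest_walk_def by metis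
  then show ?thesis
    using assms(1) \<open>bs \<noteq> []\<close> unfolding xs shortest_walk_def by (cases bs) auto
qed

text \<open>The cycle runs from the last common vertex \<open>z\<close> of the two walks along \<open>xs\<close>, across the
  edge between their ends, and back along \<open>ys\<close> to \<open>z\<close>.\<close>

lemma cycle_of_two_walks:
  assumes g: "graph V E"
    and "walk V E xs" "walk V E ys" "distinct xs" "distinct ys"
    and "hd xs = hd ys" "E (last xs) (last ys)"
    and "last xs \<notin> set ys" "last ys \<notin> set xs"
  shows "\<exists>c. is_cycle V E c"
proof -
  have sym: "\<And>x y. E x y \<Longrightarrow> E y x"
    using g by (simp add: graph_def)
  have "xs \<noteq> []" "ys \<noteq> []"
    using assms(2,3) by (auto simp: walk_def)
  then have "\<exists>x\<in>set xs. x \<in> set ys"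
    using assms(6) by (metis hd_in_set)
  then obtain xs1 z xs2 where xs: "xs = xs1 @ z # xs2" "z \<in> set ys" "\<forall>u\<in>set xs2. u \<notin> set ys"
    using split_list_last_prop[of xs "\<lambda>x. x \<in> set ys"] by blast
  obtain ys1 ys2 where ys: "ys = ys1 @ z # ys2"
    using xs(2) split_list by metis
  have "xs2 \<noteq> []" "ys2 \<noteq> []"
    using assms(8,9) xs ys by auto
  let ?c = "z # xs2 @ rev ys2"
  have "successively E (z # xs2)" "successively E (z # ys2)"
    using assms(2,3) xs(1) ys by (auto simp: walk_iff_successively successively_append_iff)
  moreover have "successively E (rev ys2) \<longleftrightarrow> successively (\<lambda>x y. E y x) ys2"
    by simp
  moreover have "successively (\<lambda>x y. E y x) ys2 \<longleftrightarrow> successively E ys2"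
    using sym by (metis successively_mono)
  ultimately have walk_c: "successively E ?c" "E z (hd ys2)"
    using assms(7) xs(1) ys \<open>xs2 \<noteq> []\<close> \<open>ys2 \<noteq> []\<close>
    by (simp_all only: append_Cons[symmetric] successively_append_iff successively_Cons)
       (auto simp: hd_rev last_rev neq_Nil_conv successively_Cons)
  have "is_cycle V E ?c"
    unfolding is_cycle_def walk_iff_successively
    using walk_c assms(2-5) xs ys \<open>xs2 \<noteq> []\<close> \<open>ys2 \<noteq> []\<close> sym
    by (auto simp: walk_def last_rev neq_Nil_conv)
  then show ?thesis ..
qed

lemma tree_adjacent_gdist_neq:
  assumes t: "tree V E" and "r \<in> V" and "E a b"
  shows "gdist V E r a \<noteq> gdist V E r b"
proof
  assume eq: "gdist V E r a = gdist V E r b"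
  have g: "graph V E" and "connected_graph V E"
    using t by (auto simp: tree_def)
  have "a \<in> V" "b \<in> V" "a \<noteq> b"
    using g \<open>E a b\<close> by (auto simp: graph_def)
  obtain xs ys where xs: "shortest_walk V E r a xs" and ys: "shortest_walk V E r b ys"
    using shortest_walk_exists \<open>connected_graph V E\<close> \<open>r \<in> V\<close> \<open>a \<in> V\<close> \<open>b \<in> V\<close> by metis
  have "a \<notin> set ys" "b \<notin> set xs"
    using gdist_less_if_in_shortest_walk[OF ys, of a] gdist_less_if_in_shortest_walk[OF xs, of b]
      eq \<open>a \<noteq> b\<close> by auto
  then have "\<exists>c. is_cycle V E c"
    using cycle_of_two_walks[OF g] shortest_walk_distinct[OF xs] shortest_walk_distinct[OF ys]
      xs ys \<open>E a b\<close> unfolding shortest_walk_def by metis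
  then show False
    using t by (simp add: tree_def)
qed

definition parent :: "'a set \<Rightarrow> ('a \<Rightarrow> 'a \<Rightarrow> bool) \<Rightarrow> 'a \<Rightarrow> 'a \<Rightarrow> 'a \<Rightarrow> bool" where
  "parent V E r a b \<longleftrightarrow> E a b \<and> gdist V E r a < gdist V E r b"

lemma tree_edge_parent_cases:
  assumes "tree V E" "r \<in> V" "E a b"
  shows "parent V E r a b \<or> parent V E r b a"
proof -
  have "E b a"
    using assms by (simp add: tree_def graph_def)
  then show ?thesis
    using tree_adjacent_gdist_neq[OF assms] assms(3) unfolding parent_def by linarith
qed

lemma parent_exists:
  assumes "connected_graph V E" "r \<in> V" "v \<in> V" "v \<noteq> r"
  obtains c where "parent V E r c v"
proof -
  obtain xs where xs: "shortest_walk V E r v xs"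
    using shortest_walk_exists assms(1-3) by metis
  then have "xs \<noteq> []" "hd xs = r" "last xs = v"
    by (auto simp: shortest_walk_def walk_def)
  then have "xs = butlast xs @ [v]" "butlast xs \<noteq> []"
    using \<open>v \<noteq> r\<close> by (metis append_butlast_last_id, metis append_butlast_last_id append_Nil list.sel(1))
  then obtain as c where "xs = as @ [c, v]"
    by (metis rev_exhaust append_Cons append_assoc self_append_conv2)
  moreover from this have "E c v" "gdist V E r c \<le> length as"
    using xs gdist_le_prefix_length[of V E as c "[v]" r]
    by (auto simp: shortest_walk_def walk_iff_successively successively_append_iff)
  ultimately have "parent V E r c v"
    using xs unfolding parent_def shortest_walk_def by auto
  then show ?thesis
    by (rule that)
qed

text \<open>If the parent \<open>c\<close> is at least as far from the root as \<open>c'\<close>, it is not on a shortest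
  walk to \<open>c'\<close>, and that walk extended by \<open>b\<close> closes a cycle with a shortest walk to \<open>c\<close>.\<close>

lemma tree_parent_unique:
  assumes t: "tree V E" and "r \<in> V" and "parent V E r c b" "parent V E r c' b"
  shows "c = c'"
proof -
  have g: "graph V E" and "connected_graph V E"
    using t by (auto simp: tree_def)
  have False if "c \<noteq> c'" "parent V E r c b" "parent V E r c' b"
    and le: "gdist V E r c' \<le> gdist V E r c" for c c'
  proof -
    have "E c b" "E c' b" "gdist V E r c < gdist V E r b" "gdist V E r c' < gdist V E r b"
      using that unfolding parent_def by auto
    then have "c \<in> V" "c' \<in> V" "c \<noteq> b"
      using g by (auto simp: graph_def)
    obtain xs ys where xs: "shortest_walk V E r c xs" and ys: "shortest_walk V E r c' ys"
      using shortest_walk_exists \<open>connected_graph V E\<close> \<open>r \<in> V\<close> \<open>c \<in> V\<close> \<open>c' \<in> V\<close> by metis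
    have "b \<notin> set xs"
      using gdist_less_if_in_shortest_walk[OF xs, of b] \<open>gdist V E r c < gdist V E r b\<close>
      by (cases "b = c") auto
    moreover have "b \<notin> set ys"
      using gdist_less_if_in_shortest_walk[OF ys, of b] \<open>gdist V E r c' < gdist V E r b\<close>
      by (cases "b = c'") auto
    moreover have "c \<notin> set ys"
      using gdist_less_if_in_shortest_walk[OF ys, of c] le \<open>c \<noteq> c'\<close> by auto
    moreover have "walk V E (ys @ [b])"
      using ys \<open>E c' b\<close> g
      by (auto simp: shortest_walk_def walk_iff_successively successively_append_iff graph_def)
    ultimately have "\<exists>cyc. is_cycle V E cyc"
      using cycle_of_two_walks[OF g, of xs "ys @ [b]"] shortest_walk_distinct[OF xs]
        shortest_walk_distinct[OF ys] xs ys \<open>E c b\<close> \<open>c \<noteq> b\<close>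
      by (auto simp: shortest_walk_def walk_def)
    then show False
      using t by (simp add: tree_def)
  qed
  then show ?thesis
    using assms(3,4) nat_le_linear by metis
qed

lemma finite_nbhd: "graph V E \<Longrightarrow> finite (nbhd V E b)"
  by (simp add: graph_def nbhd_def)

lemma mem_nbhd_iff: "graph V E \<Longrightarrow> a \<in> nbhd V E b \<longleftrightarrow> E a b"
  by (auto simp: graph_def nbhd_def)

definition condII_edge :: "'a set \<Rightarrow> ('a \<Rightarrow> 'a \<Rightarrow> bool) \<Rightarrow> 'a set \<Rightarrow> 'a \<Rightarrow> 'a \<Rightarrow> bool" where
  "condII_edge V E S a b \<longleftrightarrow>
     (a \<notin> S \<and> b \<notin> S \<longrightarrow> nbhd V E b \<inter> S = {}) \<and>
     (a \<notin> S \<and> b \<in> S \<longrightarrow> card (nbhd V E b \<inter> S) \<le> 1) \<and>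
     (a \<in> S \<and> b \<notin> S \<longrightarrow> card ((nbhd V E b \<inter> S) - {a}) = 1) \<and>
     (a \<in> S \<and> b \<in> S \<longrightarrow> card ((nbhd V E b \<inter> S) - {a}) = 0)"

lemma condII_iff_condII_edge:
  "condII V E S l \<longleftrightarrow> (\<forall>a b. parent V E l a b \<longrightarrow> condII_edge V E S a b)"
  unfolding condII_def condII_edge_def parent_def by blast

lemma condII_card_nbhd_inter_le_1:
  assumes t: "tree V E" and "leaf V E l" "condII V E S l" "b \<in> V" "b \<in> S"
  shows "card (nbhd V E b \<inter> S) \<le> 1"
proof -
  have g: "graph V E" and "connected_graph V E" and "l \<in> V"
    using assms by (auto simp: tree_def leaf_def)
  show ?thesis
  proof (cases "b = l")
    case True
    then show ?thesis
      using \<open>leaf V E l\<close> finite_nbhd[OF g] card_mono[of "nbhd V E b" "nbhd V E b \<inter> S"]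
      by (simp add: leaf_def)
  next
    case False
    then obtain c where "parent V E l c b"
      using parent_exists \<open>connected_graph V E\<close> \<open>l \<in> V\<close> \<open>b \<in> V\<close> by metis
    then have edge: "condII_edge V E S c b"
      using \<open>condII V E S l\<close> condII_iff_condII_edge by metis
    show ?thesis
    proof (cases "c \<in> S")
      case True
      then have "card (nbhd V E b \<inter> S - {c}) = 0"
        using edge \<open>b \<in> S\<close> by (simp add: condII_edge_def)
      then have "nbhd V E b \<inter> S \<subseteq> {c}"
        using finite_nbhd[OF g] by auto
      then show ?thesis
        using card_mono[of "{c}"] by simp
    next
      case False
      then show ?thesis
        using edge \<open>b \<in> S\<close> by (simp add: condII_edge_def)
    qed
  qed
qed

lemma condII_edge_if_card_nbhd_inter_le_1:
  assumes g: "graph V E" and "E a b" "b \<in> S" "card (nbhd V E b \<inter> S) \<le> 1"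
  shows "condII_edge V E S a b"
proof -
  have "a \<in> S \<Longrightarrow> card (nbhd V E b \<inter> S - {a}) = card (nbhd V E b \<inter> S) - 1"
    using finite_nbhd[OF g] mem_nbhd_iff[OF g] \<open>E a b\<close> by simp
  then show ?thesis
    using assms unfolding condII_edge_def by auto
qed

text \<open>By clause (i), a vertex \<open>y \<notin> S\<close> entered from \<open>x \<notin> S\<close> has no neighbour in \<open>S\<close>, in
  particular not its \<open>r\<close>-parent, which by uniqueness of \<open>l\<close>-parents is an \<open>l\<close>-child of \<open>y\<close>.
  So the configuration repeats one step closer to \<open>r\<close>, which is impossible as \<open>r \<in> S\<close>.\<close>

lemma condII_reversed_edge_touches_S:
  assumes t: "tree V E" and "l \<in> V" "condII V E S l" "r \<in> V" "r \<in> S"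
    and "parent V E l x y" "parent V E r y x"
  shows "x \<in> S \<or> y \<in> S"
  using assms(6,7)
proof (induction "gdist V E r y" arbitrary: x y rule: less_induct)
  case less
  show ?case
  proof (rule ccontr)
    assume "\<not> (x \<in> S \<or> y \<in> S)"
    have g: "graph V E" and "connected_graph V E"
      using t by (auto simp: tree_def)
    have "y \<in> V"
      using less.prems(1) g unfolding parent_def graph_def by blast
    have "condII_edge V E S x y"
      using \<open>condII V E S l\<close> less.prems(1) condII_iff_condII_edge by metis
    then have no_S_nbhd: "nbhd V E y \<inter> S = {}"
      using \<open>\<not> (x \<in> S \<or> y \<in> S)\<close> by (simp add: condII_edge_def)
    obtain z where z: "parent V E r z y"
      using parent_exists \<open>connected_graph V E\<close> \<open>r \<in> V\<close> \<open>y \<in> V\<close> \<open>r \<in> S\<close> \<open>\<not> (x \<in> S \<or> y \<in> S)\<close>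
      by metis
    then have "E y z" "gdist V E r z < gdist V E r y"
      using g unfolding parent_def graph_def by blast+
    have "z \<noteq> x"
      using z less.prems(2) unfolding parent_def by auto
    then have "\<not> parent V E l z y"
      using tree_parent_unique[OF t \<open>l \<in> V\<close> _ less.prems(1)] by blast
    then have "parent V E l y z"
      using tree_edge_parent_cases[OF t \<open>l \<in> V\<close> \<open>E y z\<close>] by blast
    moreover have "parent V E r z y" by (fact z)
    moreover have "z \<notin> S"
      using no_S_nbhd mem_nbhd_iff[OF g, of z y] z unfolding parent_def by blast
    ultimately show False
      using less.hyps[OF \<open>gdist V E r z < gdist V E r y\<close>] \<open>\<not> (x \<in> S \<or> y \<in> S)\<close> by blast
  qed
qed

lemma condII_edge_reversed_outside:
  assumes t: "tree V E" and "l \<in> V" "l \<in> S" "condII V E S l" "r \<in> V" "r \<in> S"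
    and "parent V E l b a" "parent V E r a b" "b \<notin> S"
  shows "condII_edge V E S a b"
proof -
  have g: "graph V E" and "connected_graph V E"
    using t by (auto simp: tree_def)
  have "a \<in> S"
    using condII_reversed_edge_touches_S[OF t \<open>l \<in> V\<close> \<open>condII V E S l\<close> \<open>r \<in> V\<close> \<open>r \<in> S\<close>]
      assms(7-9) by blast
  have "b \<in> V"
    using \<open>parent V E l b a\<close> g unfolding parent_def graph_def by blast
  moreover have "b \<noteq> l"
    using \<open>l \<in> S\<close> \<open>b \<notin> S\<close> by blast
  ultimately obtain c where c: "parent V E l c b"
    using parent_exists \<open>connected_graph V E\<close> \<open>l \<in> V\<close> by metis
  then have "c \<noteq> a"
    using \<open>parent V E l b a\<close> unfolding parent_def by auto
  have edge: "condII_edge V E S c b"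
    using \<open>condII V E S l\<close> c condII_iff_condII_edge by metis
  have "a \<in> nbhd V E b \<inter> S" "c \<in> nbhd V E b"
    using \<open>a \<in> S\<close> c \<open>parent V E r a b\<close> mem_nbhd_iff[OF g] unfolding parent_def by blast+
  then have "c \<in> S"
    using edge \<open>b \<notin> S\<close> unfolding condII_edge_def by blast
  then have "card (nbhd V E b \<inter> S - {c}) = 1"
    using edge \<open>b \<notin> S\<close> by (simp add: condII_edge_def)
  then have "nbhd V E b \<inter> S - {c} = {a}"
    using \<open>a \<in> nbhd V E b \<inter> S\<close> \<open>c \<noteq> a\<close> by (metis card_1_singletonE insertE Diff_iff empty_iff singletonD)
  then have "nbhd V E b \<inter> S - {a} = {c}"
    using \<open>c \<in> nbhd V E b\<close> \<open>c \<in> S\<close> \<open>c \<noteq> a\<close> by blast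
  then show ?thesis
    using \<open>a \<in> S\<close> \<open>b \<notin> S\<close> by (simp add: condII_edge_def)
qed

theorem mainTheorem10:
  fixes V :: "'a set" and E :: "'a \<Rightarrow> 'a \<Rightarrow> bool" and S :: "'a set" and l1 l2 :: 'a
  assumes "tree V E" and "card V \<ge> 3" and "S \<subseteq> V"
    and "l1 \<in> S" and "leaf V E l1" and "condII V E S l1"
    and "l2 \<in> S" and "leaf V E l2" and "l2 \<noteq> l1"
  shows "condII V E S l2"
  unfolding condII_iff_condII_edge
proof (intro allI impI)
  fix a b
  assume "parent V E l2 a b"
  have g: "graph V E" and "l1 \<in> V" "l2 \<in> V"
    using assms by (auto simp: tree_def leaf_def)
  have "E a b" "b \<in> V"
    using \<open>parent V E l2 a b\<close> g unfolding parent_def graph_def by blast+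
  consider "parent V E l1 a b" | "parent V E l1 b a"
    using tree_edge_parent_cases[OF \<open>tree V E\<close> \<open>l1 \<in> V\<close> \<open>E a b\<close>] by blast
  then show "condII_edge V E S a b"
  proof cases
    case 1
    then show ?thesis
      using \<open>condII V E S l1\<close> condII_iff_condII_edge by metis
  next
    case 2
    show ?thesis
    proof (cases "b \<in> S")
      case True
      then show ?thesis
        using condII_edge_if_card_nbhd_inter_le_1[OF g \<open>E a b\<close>]
          condII_card_nbhd_inter_le_1[OF \<open>tree V E\<close> \<open>leaf V E l1\<close> \<open>condII V E S l1\<close> \<open>b \<in> V\<close>]
        by blast
    next
      case False
      then show ?thesis
        using condII_edge_reversed_outside[OF \<open>tree V E\<close> \<open>l1 \<in> V\<close> \<open>l1 \<in> S\<close> \<open>condII V E S l1\<close>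
            \<open>l2 \<in> V\<close> \<open>l2 \<in> S\<close> 2 \<open>parent V E l2 a b\<close>] by blast
    qed
  qed
qed

end
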